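(* Let $\theta=(\{X_s\}_{s\in\mathcal{S}},\{\theta_s\}_{s\in\mathcal{S}})$ be an ordered partial action of an inverse semigroupoid $\mathcal{S}$ on a semilatticeoid $X$ equipped with its natural partial order. Then for each $s\in\mathcal{S}$: (a) $X_s$ is an ideal of $X$, i.e. if $x\in X$, $y\in X_s$ and $(x,y)\in X^{(2)}$ then $xy\in X_s$; (b) $\theta_s$ is a morphism, i.e. for all $x,y\in X_{s^*}$ with $(x,y)\in X^{(2)}$ we have $(\theta_s(x),\theta_s(y))\in X^{(2)}$ and $\theta_s(xy)=\theta_s(x)\theta_s(y)$.
   Context: Inverse semigroupoid: arrows $\mathcal{S}$, objects $\mathcal{S}^{(0)}$, maps $d,c$, associative multiplication on $\mathcal{S}^{(2)}=\{(s,t):d(s)=c(t)\}$ with $d(st)=d(t)$, $c(st)=c(s)$, and unique $s^*$ with $ss^*s=s$, $s^*ss^*=s^*$; natural partial order on parallel arrows: $s\leqslant t$ iff $s=te$ for an idempotent $e$ with $(t,e)\in\mathcal{S}^{(2)}$. A semilatticeoid is an inverse semigroupoid $X$ all of whose elements are idempotent; equivalently a disjoint union of meet semilattices $X_u$, $u\in X^{(0)}$, where $(x,y)\in X^{(2)}$ iff $x,y$ lie over the same object and $xy$ is their meet; the natural order is $x\leqslant y$ iff $x=xy$ (same object). A partial action of $\mathcal{S}$ on a set $X$ is a pair $(\{X_s\},\{\theta_s\})$ of subsets $X_s\subseteq X$ and maps $\theta_s:X_{s^*}\to X_s$ such that: each $\theta_s$ is a bijection with $\theta_s^{-1}=\theta_{s^*}$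 and $X=\bigcup_s X_s$; $\theta_s\circ\theta_t\subseteq\theta_{st}$ as partial maps for $(s,t)\in\mathcal{S}^{(2)}$; $X_s\subseteq X_t$ whenever $s\leqslant t$. For a poset $X$ it is ordered if each $X_s$ is an order ideal and each $\theta_s$ an order isomorphism. *)

theory Defs
  imports Main
begin

text \<open>An inverse semigroupoid: arrows, objects, domain, codomain, partial
multiplication (meaningful on composable pairs) and the inverse map.\<close>

record ('a, 'o) semigroupoid =
  arr  :: "'a set"
  obj  :: "'o set"
  dm   :: "'a \<Rightarrow> 'o"
  cd   :: "'a \<Rightarrow> 'o"
  mult :: "'a \<Rightarrow> 'a \<Rightarrow> 'a"
  star :: "'a \<Rightarrow> 'a"

definition composable :: "('a, 'o, 'e) semigroupoid_scheme \<Rightarrow> 'a \<Rightarrow> 'a \<Rightarrow> bool" where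
  "composable S s t \<longleftrightarrow> s \<in> arr S \<and> t \<in> arr S \<and> dm S s = cd S t"

definition inverse_semigroupoid :: "('a, 'o, 'e) semigroupoid_scheme \<Rightarrow> bool" where
  "inverse_semigroupoid S \<longleftrightarrow>
     (\<forall>s\<in>arr S. dm S s \<in> obj S \<and> cd S s \<in> obj S) \<and>
     (\<forall>s t. composable S s t \<longrightarrow>
        mult S s t \<in> arr S \<and> dm S (mult S s t) = dm S t \<and> cd S (mult S s t) = cd S s) \<and>
     (\<forall>r s t. composable S r s \<longrightarrow> composable S s t \<longrightarrow>
        mult S (mult S r s) t = mult S r (mult S s t)) \<and>
     (\<forall>s\<in>arr S. star S s \<in> arr S \<and> dm S (star S s) = cd S s \<and> cd S (star S s) = dm S s \<and>
        mult S (mult S s (star S s)) s = s \<and>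
        mult S (mult S (star S s) s) (star S s) = star S s \<and>
        (\<forall>t\<in>arr S. dm S t = cd S s \<and> cd S t = dm S s \<and>
           mult S (mult S s t) s = s \<and> mult S (mult S t s) t = t \<longrightarrow> t = star S s))"

definition idempotent :: "('a, 'o, 'e) semigroupoid_scheme \<Rightarrow> 'a \<Rightarrow> bool" where
  "idempotent S e \<longleftrightarrow> composable S e e \<and> mult S e e = e"

definition nat_le :: "('a, 'o, 'e) semigroupoid_scheme \<Rightarrow> 'a \<Rightarrow> 'a \<Rightarrow> bool" where
  "nat_le S s t \<longleftrightarrow> s \<in> arr S \<and> t \<in> arr S \<and> dm S s = dm S t \<and> cd S s = cd S t \<and>
     (\<exists>e. idempotent S e \<and> composable S t e \<and> s = mult S t e)"

definition semilatticeoid :: "('a, 'o, 'e) semigroupoid_scheme \<Rightarrow> bool" where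
  "semilatticeoid X \<longleftrightarrow> inverse_semigroupoid X \<and> (\<forall>x\<in>arr X. idempotent X x)"

definition partial_action ::
  "('a, 'o, 'e) semigroupoid_scheme \<Rightarrow> 'x set \<Rightarrow> ('a \<Rightarrow> 'x set) \<Rightarrow> ('a \<Rightarrow> 'x \<Rightarrow> 'x) \<Rightarrow> bool" where
  "partial_action S A Xs th \<longleftrightarrow>
     (\<forall>s\<in>arr S. Xs s \<subseteq> A) \<and>
     (\<forall>s\<in>arr S. bij_betw (th s) (Xs (star S s)) (Xs s) \<and>
        (\<forall>y\<in>Xs s. th (star S s) y = the_inv_into (Xs (star S s)) (th s) y)) \<and>
     A = (\<Union>s\<in>arr S. Xs s) \<and>
     (\<forall>s t. composable S s t \<longrightarrow>
        (\<forall>x. x \<in> Xs (star S t) \<and> th t x \<in> Xs (star S s) \<longrightarrow>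
           x \<in> Xs (star S (mult S s t)) \<and> th (mult S s t) x = th s (th t x))) \<and>
     (\<forall>s t. nat_le S s t \<longrightarrow> Xs s \<subseteq> Xs t)"

definition ordered_partial_action ::
  "('a, 'o, 'e) semigroupoid_scheme \<Rightarrow> 'x set \<Rightarrow> ('x \<Rightarrow> 'x \<Rightarrow> bool) \<Rightarrow> ('a \<Rightarrow> 'x set) \<Rightarrow> ('a \<Rightarrow> 'x \<Rightarrow> 'x) \<Rightarrow> bool" where
  "ordered_partial_action S A le Xs th \<longleftrightarrow>
     partial_action S A Xs th \<and>
     (\<forall>s\<in>arr S. \<forall>x\<in>A. \<forall>y\<in>Xs s. le x y \<longrightarrow> x \<in> Xs s) \<and>
     (\<forall>s\<in>arr S. \<forall>x\<in>Xs (star S s). \<forall>y\<in>Xs (star S s). le x y \<longleftrightarrow> le (th s x) (th s y))"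

end

theory Submission
  imports Defs
begin

text \<open>In a semilatticeoid any two composable elements commute: \<open>fe\<close> is an inverse of \<open>ef\<close>,
and \<open>ef\<close>, being idempotent, is its own unique inverse. Hence \<open>xy\<close> is the meet of \<open>x\<close>
and \<open>y\<close> in the natural order. Part (a) follows because \<open>xy \<le> y\<close> and \<open>X\<^sub>s\<close> is an
order ideal. For (b), \<open>\<theta>\<^sub>s(xy)\<close> is a lower bound of \<open>\<theta>\<^sub>s x\<close> and \<open>\<theta>\<^sub>s y\<close>;
conversely their meet lies in the order ideal \<open>X\<^sub>s\<close>, so it is \<open>\<theta>\<^sub>s u\<close> for a lower bound
\<open>u\<close> of \<open>x\<close> and \<open>y\<close>, whence it lies below \<open>\<theta>\<^sub>s(xy)\<close>.\<close>

definition order_ideal :: "('x, 'p, 'e) semigroupoid_scheme \<Rightarrow> 'x set \<Rightarrow> bool" where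
  "order_ideal X I \<longleftrightarrow> I \<subseteq> arr X \<and> (\<forall>x\<in>arr X. \<forall>y\<in>I. nat_le X x y \<longrightarrow> x \<in> I)"

context
  fixes X :: "('x, 'p, 'e) semigroupoid_scheme"
  assumes X: "semilatticeoid X"
begin

lemma dm_eq_cd: "x \<in> arr X \<Longrightarrow> dm X x = cd X x"
  and mult_self: "x \<in> arr X \<Longrightarrow> mult X x x = x"
  using X unfolding semilatticeoid_def idempotent_def composable_def by auto

lemma composable_iff: "composable X x y \<longleftrightarrow> x \<in> arr X \<and> y \<in> arr X \<and> dm X x = dm X y"
  using dm_eq_cd unfolding composable_def by auto

lemma mult_closed: "composable X x y \<Longrightarrow> mult X x y \<in> arr X"
  and dm_mult: "composable X x y \<Longrightarrow> dm X (mult X x y) = dm X y"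
  using X unfolding semilatticeoid_def inverse_semigroupoid_def by auto

lemma mult_assoc:
  "composable X r s \<Longrightarrow> composable X s t \<Longrightarrow> mult X (mult X r s) t = mult X r (mult X s t)"
  using X unfolding semilatticeoid_def inverse_semigroupoid_def by auto

lemma star_unique:
  assumes "composable X s t" "mult X (mult X s t) s = s" "mult X (mult X t s) t = t"
  shows "t = star X s"
proof -
  have "\<forall>s\<in>arr X. \<forall>t\<in>arr X. dm X t = cd X s \<and> cd X t = dm X s \<and>
      mult X (mult X s t) s = s \<and> mult X (mult X t s) t = t \<longrightarrow> t = star X s"
    using X unfolding semilatticeoid_def inverse_semigroupoid_def by blast
  then show ?thesis
    using assms dm_eq_cd unfolding composable_iff by auto
qed

lemma star_self: "x \<in> arr X \<Longrightarrow> star X x = x"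
  using star_unique[of x x] mult_self composable_iff by simp

lemma mult_commute:
  assumes "composable X e f"
  shows "mult X e f = mult X f e"
proof -
  have ef_fe_ef: "mult X (mult X (mult X a b) (mult X b a)) (mult X a b) = mult X a b"
    if "composable X a b" for a b
  proof -
    let ?x = "mult X a b"
    have ab: "a \<in> arr X" "b \<in> arr X" "dm X a = dm X b"
      using that composable_iff by auto
    then have c: "composable X b a" "composable X a a" "composable X b b"
      "composable X a ?x" "composable X ?x b" "composable X b ?x"
      "composable X ?x (mult X b a)" "composable X (mult X b a) ?x"
      using composable_iff mult_closed dm_mult that by auto
    have ax: "mult X a ?x = ?x" and xb: "mult X ?x b = ?x"
      using mult_assoc[OF c(2) that] mult_assoc[OF that c(3)] mult_self ab by simp_all
    have "mult X (mult X ?x (mult X b a)) ?x = mult X ?x (mult X (mult X b a) ?x)"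
      using mult_assoc[OF c(7) c(8)] .
    also have "mult X (mult X b a) ?x = mult X b ?x"
      using mult_assoc[OF c(1) c(4)] ax by simp
    also have "mult X ?x (mult X b ?x) = ?x"
      using mult_assoc[OF c(5) c(6)] xb mult_self mult_closed that by simp
    finally show ?thesis .
  qed
  \<comment> \<open>\<open>fe\<close> is an inverse of \<open>ef\<close>, which is idempotent and hence its own inverse.\<close>
  have fe: "composable X f e"
    using assms composable_iff by auto
  have "composable X (mult X e f) (mult X f e)"
    using assms fe composable_iff mult_closed dm_mult by auto
  then have "mult X f e = star X (mult X e f)"
    using star_unique ef_fe_ef[OF assms] ef_fe_ef[OF fe] by blast
  then show ?thesis
    using star_self mult_closed assms by simp
qed

lemma nat_le_iff: "nat_le X a b \<longleftrightarrow> composable X b a \<and> a = mult X b a"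
proof
  assume "nat_le X a b"
  then obtain e where ab: "a \<in> arr X" "b \<in> arr X" "dm X a = dm X b"
    and e: "idempotent X e" "composable X b e" "a = mult X b e"
    unfolding nat_le_def by auto
  have "composable X b b"
    using ab composable_iff by simp
  then have "mult X b a = mult X (mult X b b) e"
    using mult_assoc e(2,3) by simp
  then show "composable X b a \<and> a = mult X b a"
    using ab e(3) mult_self composable_iff by simp
next
  assume "composable X b a \<and> a = mult X b a"
  then show "nat_le X a b"
    using X dm_eq_cd unfolding nat_le_def composable_iff semilatticeoid_def by metis
qed

lemma nat_le_refl: "a \<in> arr X \<Longrightarrow> nat_le X a a"
  using nat_le_iff composable_iff mult_self by simp

lemma nat_le_antisym:
  assumes "nat_le X a b" "nat_le X b a"
  shows "a = b"
  using assms mult_commute nat_le_iff by metis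

lemma nat_le_mult_iff:
  assumes xy: "composable X x y"
  shows "nat_le X z (mult X x y) \<longleftrightarrow> nat_le X z x \<and> nat_le X z y"
proof -
  have xy_arr: "x \<in> arr X" "y \<in> arr X" "dm X x = dm X y"
    using xy composable_iff by auto
  have yx: "composable X y x" and xx: "composable X x x" and yy: "composable X y y"
    using xy_arr composable_iff by auto
  have xxy: "mult X x (mult X x y) = mult X x y"
    using mult_assoc[OF xx xy] mult_self xy_arr by simp
  have yxy: "mult X y (mult X x y) = mult X x y"
    using mult_commute[OF xy] mult_assoc[OF yy yx] mult_self xy_arr by simp
  show ?thesis
  proof
    assume "nat_le X z (mult X x y)"
    then have c: "composable X (mult X x y) z" and z: "mult X (mult X x y) z = z"
      using nat_le_iff by auto
    have cx: "composable X x (mult X x y)" and cy: "composable X y (mult X x y)"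
      using xy_arr xy mult_closed dm_mult composable_iff by auto
    have "mult X x z = z" "mult X y z = z"
      using mult_assoc[OF cx c] mult_assoc[OF cy c] xxy yxy z by metis+
    moreover have "composable X x z" "composable X y z"
      using c xy_arr mult_closed dm_mult xy composable_iff by auto
    ultimately show "nat_le X z x \<and> nat_le X z y"
      using nat_le_iff by simp
  next
    assume "nat_le X z x \<and> nat_le X z y"
    then have xz: "composable X x z" "mult X x z = z" and yz: "composable X y z" "mult X y z = z"
      using nat_le_iff by auto
    have "mult X (mult X x y) z = z"
      using mult_assoc[OF xy yz(1)] xz yz by simp
    moreover have "composable X (mult X x y) z"
      using xy yz(1) mult_closed dm_mult composable_iff xy_arr by auto
    ultimately show "nat_le X z (mult X x y)"
      using nat_le_iff by simp
  qed
qed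

lemma order_ideal_mult_closed:
  assumes "order_ideal X I" "composable X x y" "y \<in> I"
  shows "mult X x y \<in> I"
  using assms mult_closed nat_le_mult_iff nat_le_refl unfolding order_ideal_def by blast

lemma order_iso_preserves_mult:
  assumes I: "order_ideal X I" and J: "order_ideal X J" and f: "bij_betw f I J"
    and iso: "\<And>x y. x \<in> I \<Longrightarrow> y \<in> I \<Longrightarrow> nat_le X x y \<longleftrightarrow> nat_le X (f x) (f y)"
    and x: "x \<in> I" and y: "y \<in> I" and xy: "composable X x y"
  shows "composable X (f x) (f y) \<and> f (mult X x y) = mult X (f x) (f y)"
proof -
  define z where "z = mult X x y"
  have z: "z \<in> I"
    unfolding z_def using order_ideal_mult_closed[OF I xy y] .
  have "nat_le X z x" "nat_le X z y"
    unfolding z_def using nat_le_mult_iff[OF xy] nat_le_refl mult_closed[OF xy] by auto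
  then have fzx: "nat_le X (f z) (f x)" and fzy: "nat_le X (f z) (f y)"
    using iso z x y by auto
  have fxy: "composable X (f x) (f y)"
    using fzx fzy nat_le_iff composable_iff by metis
  define w where "w = mult X (f x) (f y)"
  have wx: "nat_le X w (f x)" and wy: "nat_le X w (f y)"
    unfolding w_def using nat_le_mult_iff[OF fxy] nat_le_refl mult_closed[OF fxy] by auto
  have "f x \<in> J"
    using f x by (auto simp: bij_betw_def)
  then have "w \<in> J"
    using J wx mult_closed[OF fxy] unfolding w_def order_ideal_def by blast
  then obtain u where u: "u \<in> I" "f u = w"
    using f by (auto simp: bij_betw_def)
  have "nat_le X u z"
    unfolding z_def using nat_le_mult_iff[OF xy] iso u x y wx wy by simp
  then have "nat_le X w (f z)"
    using iso u z by simp
  moreover have "nat_le X (f z) w"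
    unfolding w_def using nat_le_mult_iff[OF fxy] fzx fzy by simp
  ultimately show ?thesis
    using fxy nat_le_antisym unfolding z_def w_def by blast
qed

end

lemma ordered_partial_actionD:
  assumes "ordered_partial_action S A le Xs th" "s \<in> arr S"
  shows "Xs s \<subseteq> A" "\<forall>x\<in>A. \<forall>y\<in>Xs s. le x y \<longrightarrow> x \<in> Xs s"
    "bij_betw (th s) (Xs (star S s)) (Xs s)"
    "\<And>x y. x \<in> Xs (star S s) \<Longrightarrow> y \<in> Xs (star S s) \<Longrightarrow> le x y \<longleftrightarrow> le (th s x) (th s y)"
  using assms unfolding ordered_partial_action_def partial_action_def by blast+

theorem mainTheorem8:
  fixes S :: "('a, 'o) semigroupoid" and X :: "('x, 'p) semigroupoid"
    and Xs :: "'a \<Rightarrow> 'x set" and th :: "'a \<Rightarrow> 'x \<Rightarrow> 'x"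
  assumes "inverse_semigroupoid S"
    and "semilatticeoid X"
    and "ordered_partial_action S (arr X) (nat_le X) Xs th"
    and "s \<in> arr S"
  shows "(\<forall>x y. x \<in> arr X \<and> y \<in> Xs s \<and> composable X x y \<longrightarrow> mult X x y \<in> Xs s)
       \<and> (\<forall>x\<in>Xs (star S s). \<forall>y\<in>Xs (star S s). composable X x y \<longrightarrow>
            composable X (th s x) (th s y) \<and> th s (mult X x y) = mult X (th s x) (th s y))"
proof -
  have "star S s \<in> arr S"
    using assms(1,4) by (simp add: inverse_semigroupoid_def)
  then have dom: "order_ideal X (Xs (star S s))"
    using ordered_partial_actionD(1,2)[OF assms(3)] unfolding order_ideal_def by blast
  have ran: "order_ideal X (Xs s)"
    using ordered_partial_actionD(1,2)[OF assms(3,4)] unfolding order_ideal_def by blast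
  show ?thesis
    using order_ideal_mult_closed[OF assms(2) ran]
      order_iso_preserves_mult[OF assms(2) dom ran ordered_partial_actionD(3,4)[OF assms(3,4)]]
    by blast
qed

end
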